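(* Let $N=\{1,\ldots,n\}$, let $\mathscr{B}\in\mathfrak{B}^*(n)$ and let $\mathscr{F}=\{v\in\mathscr{BG}(n):\sum_{S\in\mathscr{B}}\lambda^{\mathscr{B}}_Sv(S)=v(N)\}$ be the corresponding facet of $\mathscr{BG}(n)$. Then: (1) if $|\mathscr{B}|=n$, every game in $\mathscr{F}$ has a core reduced to a single point; (2) otherwise, no game in the relative interior of $\mathscr{F}$ has a core reduced to a single point.
   Context: A game on $N$ is a map $v:2^N\to\mathbb{R}$ with $v(\varnothing)=0$, identified with a vector in $\mathbb{R}^{2^N\setminus\{\varnothing\}}$. The core is $C(v)=\{x\in\mathbb{R}^N:\sum_{i\in S}x_i\geqslant v(S)\ \forall S\subseteq N,\ \sum_{i\in N}x_i=v(N)\}$. A collection $\mathscr{B}$ of nonempty subsets of $N$ is balanced if there exist positive weights $(\lambda_S)_{S\in\mathscr{B}}$ with $\sum_{S\in\mathscr{B},S\ni i}\lambda_S=1$ for all $i\in N$; minimal balanced if no proper subcollection is balanced, with unique weights $\lambda^{\mathscr{B}}_S$. $\mathfrak{B}^*(n)$ is the set of minimal balanced collections other than $\{N\}$. $\mathscr{BG}(n)=\{v:\sum_{S\in\mathscr{B}}\lambda^{\mathscr{B}}_Sv(S)\leqslant v(N)\ \forall\mathscr{B}\in\mathfrak{B}^*(n)\}$ is the cone of balanced games (those with nonempty core). *)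

theory Defs
  imports "HOL-Analysis.Analysis"
begin

text \<open>Players: the finite type 'n (so N = UNIV, n = CARD('n)).
  A game is a vector in real ^ ('n set) with coordinate at the empty set equal to 0.
  Collections of coalitions are values of type 'n set set.\<close>

definition balancing_weights :: "'n::finite set set \<Rightarrow> ('n set \<Rightarrow> real) \<Rightarrow> bool" where
  "balancing_weights B lam \<longleftrightarrow>
     (\<forall>S\<in>B. lam S > 0) \<and> (\<forall>i. (\<Sum>S\<in>{S\<in>B. i \<in> S}. lam S) = 1)"

definition balanced :: "'n::finite set set \<Rightarrow> bool" where
  "balanced B \<longleftrightarrow> {} \<notin> B \<and> (\<exists>lam. balancing_weights B lam)"

definition minimal_balanced :: "'n::finite set set \<Rightarrow> bool" where
  "minimal_balanced B \<longleftrightarrow> balanced B \<and> (\<forall>B'. B' \<subset> B \<longrightarrow> \<not> balanced B')"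

text \<open>The (unique, for minimal balanced collections) balancing weights.\<close>
definition bal_weight :: "'n::finite set set \<Rightarrow> 'n set \<Rightarrow> real" where
  "bal_weight B = (SOME lam. balancing_weights B lam)"

definition Bstar :: "'n::finite set set set" where
  "Bstar = {B. minimal_balanced B \<and> B \<noteq> {UNIV}}"

definition core :: "real ^ ('n::finite set) \<Rightarrow> (real ^ 'n) set" where
  "core v = {x. (\<forall>S. (\<Sum>i\<in>S. x $ i) \<ge> v $ S) \<and> (\<Sum>i\<in>UNIV. x $ i) = v $ UNIV}"

definition balanced_games :: "(real ^ ('n::finite set)) set" where
  "balanced_games = {v. v $ {} = 0 \<and>
     (\<forall>B\<in>Bstar. (\<Sum>S\<in>B. bal_weight B S * v $ S) \<le> v $ UNIV)}"

definition facet :: "'n::finite set set \<Rightarrow> (real ^ ('n set)) set" where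
  "facet B = {v \<in> balanced_games. (\<Sum>S\<in>B. bal_weight B S * v $ S) = v $ UNIV}"

end

theory Submission
  imports Defs
begin

(*
  The indicator vectors of a minimal balanced collection B are linearly independent: a linear
  dependence would allow shifting the balancing weights until one of them vanishes, leaving a
  balanced proper subcollection. Hence |B| <= n, and every core element of a game on the facet
  of B is tight on all coalitions of B.

  If |B| = n these equations have exactly one solution x. It lies in the core: a coalition T with
  x(T) < v(T) lies in the span of B, so B together with T carries a minimal balanced collection
  containing T, whose inequality v would violate.

  If |B| < n and the core is {x}, pick d orthogonal to the indicator vectors of B. By Farkas'
  lemma, each of d and -d is a nonnegative combination of indicator vectors of coalitions tight
  at x minus a nonnegative multiple of the indicator vector of N; adding the two representations
  yields a minimal balanced collection B' of tight coalitions with some S0 in B' outside B. Lowering v(S0) keeps v in the facet, so by relative interiority so does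
  raising it slightly; but the raised game violates the inequality of B'.
*)

definition coalition_sum :: "real ^ 'n::finite \<Rightarrow> 'n set \<Rightarrow> real" where
  "coalition_sum x S = (\<Sum>i\<in>S. x $ i)"

definition char_vec :: "'n::finite set \<Rightarrow> real ^ 'n" where
  "char_vec S = (\<chi> i. if i \<in> S then 1 else 0)"

definition tight :: "real ^ ('n::finite set) \<Rightarrow> real ^ 'n \<Rightarrow> 'n set set" where
  "tight v x = {S. coalition_sum x S = v $ S}"

lemma char_vec_nth [simp]: "char_vec S $ i = (if i \<in> S then 1 else 0)"
  by (simp add: char_vec_def)

lemma char_vec_empty [simp]: "char_vec {} = 0"
  by (simp add: vec_eq_iff)

lemma inj_char_vec: "inj char_vec"
proof (rule injI)
  fix S T :: "'n::finite set"
  assume eq: "char_vec S = char_vec T"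
  show "S = T"
  proof (rule set_eqI)
    fix i
    have "char_vec S $ i = char_vec T $ i"
      using eq by simp
    then show "i \<in> S \<longleftrightarrow> i \<in> T"
      by (simp split: if_splits)
  qed
qed

lemma inner_char_vec: "x \<bullet> char_vec S = coalition_sum x S"
  by (simp add: inner_vec_def coalition_sum_def if_distrib sum.If_cases)

lemma coalition_sum_empty [simp]: "coalition_sum x {} = 0"
  by (simp add: coalition_sum_def)

lemma coalition_sum_add_scaleR:
  "coalition_sum (x + t *\<^sub>R a) S = coalition_sum x S + t * coalition_sum a S"
  by (simp add: coalition_sum_def sum.distrib sum_distrib_left)

lemma mem_core_iff:
  "x \<in> core v \<longleftrightarrow> (\<forall>S. v $ S \<le> coalition_sum x S) \<and> coalition_sum x UNIV = v $ UNIV"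
  by (simp add: core_def coalition_sum_def)

lemma sum_scaleR_char_vec_nth:
  "(\<Sum>S\<in>C. f S *\<^sub>R char_vec S) $ i = (\<Sum>S\<in>{S\<in>C. i \<in> S}. f S)"
  by (simp add: sum.inter_filter if_distrib cong: if_cong)

lemma sum_scaleR_char_vec_eq_iff:
  "(\<Sum>S\<in>C. f S *\<^sub>R char_vec S) = k *\<^sub>R char_vec UNIV \<longleftrightarrow> (\<forall>i. (\<Sum>S\<in>{S\<in>C. i \<in> S}. f S) = k)"
  unfolding vec_eq_iff sum_scaleR_char_vec_nth by simp

lemma balancing_weights_iff:
  "balancing_weights C lam \<longleftrightarrow>
     (\<forall>S\<in>C. 0 < lam S) \<and> (\<Sum>S\<in>C. lam S *\<^sub>R char_vec S) = char_vec UNIV"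
  using sum_scaleR_char_vec_eq_iff[of lam C 1] by (simp add: balancing_weights_def)

lemma balancing_weights_coalition_sum:
  assumes "balancing_weights C lam"
  shows "(\<Sum>S\<in>C. lam S * coalition_sum x S) = coalition_sum x UNIV"
proof -
  have "(\<Sum>S\<in>C. lam S * coalition_sum x S) = x \<bullet> (\<Sum>S\<in>C. lam S *\<^sub>R char_vec S)"
    by (simp add: inner_sum_right inner_char_vec)
  then show ?thesis
    using assms by (simp add: balancing_weights_iff inner_char_vec)
qed

lemma Bstar_balancing_weights:
  assumes "B \<in> Bstar"
  shows "balancing_weights B (bal_weight B)"
proof -
  obtain lam where "balancing_weights B lam"
    using assms by (auto simp: Bstar_def minimal_balanced_def balanced_def)
  then show ?thesis
    unfolding bal_weight_def by (rule someI[where P = "balancing_weights B"])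
qed

lemma sum_weighted_mono_imp_eq:
  fixes f g w :: "'a \<Rightarrow> real"
  assumes "finite A" "\<forall>a\<in>A. 0 < w a" "\<forall>a\<in>A. f a \<le> g a"
    and "(\<Sum>a\<in>A. w a * g a) \<le> (\<Sum>a\<in>A. w a * f a)"
  shows "\<forall>a\<in>A. f a = g a"
proof (rule ccontr)
  assume "\<not> ?thesis"
  then obtain a where "a \<in> A" "f a < g a"
    using assms(3) by force
  then have "(\<Sum>a\<in>A. w a * f a) < (\<Sum>a\<in>A. w a * g a)"
    using assms(1-3) by (intro sum_strict_mono_ex1) auto
  then show False
    using assms(4) by simp
qed

lemma small_perturbation_pos:
  fixes f g :: "'a \<Rightarrow> real"
  assumes "finite A" "\<forall>a\<in>A. 0 < f a"
  shows "\<exists>t>0. \<forall>a\<in>A. 0 < f a + t * g a"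
proof -
  have "\<forall>\<^sub>F t in at_right 0. \<forall>a\<in>A. 0 < f a + t * g a"
  proof (rule eventually_ball_finite[OF assms(1)], intro ballI)
    fix a assume "a \<in> A"
    have "((\<lambda>t. f a + t * g a) \<longlongrightarrow> f a + 0 * g a) (at_right 0)"
      by (intro tendsto_intros)
    then show "\<forall>\<^sub>F t in at_right 0. 0 < f a + t * g a"
      using assms(2) \<open>a \<in> A\<close> by (auto dest: order_tendstoD(1))
  qed
  then have "\<forall>\<^sub>F t in at_right 0. 0 < t \<and> (\<forall>a\<in>A. 0 < f a + t * g a)"
    using eventually_at_right_less by (rule eventually_conj[rotated])
  then show ?thesis
    using eventually_happens[of _ "at_right (0::real)"] by auto
qed

lemma exists_pos_coeff:
  fixes c :: "'n::finite set \<Rightarrow> real"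
  assumes c: "(\<Sum>S\<in>C. c S *\<^sub>R char_vec S) = 0" and S0: "S0 \<in> C" "S0 \<noteq> {}" "c S0 < 0"
  shows "\<exists>S\<in>C. 0 < c S"
proof (rule ccontr)
  assume "\<not> ?thesis"
  then have nonpos: "\<forall>S\<in>C. c S \<le> 0"
    by (auto simp: not_less)
  obtain i where "i \<in> S0"
    using S0 by auto
  have "(\<Sum>S\<in>{S\<in>C. i \<in> S}. c S) < (\<Sum>S\<in>{S\<in>C. i \<in> S}. 0)"
    using nonpos S0 \<open>i \<in> S0\<close> by (intro sum_strict_mono_ex1) auto
  moreover have "(\<Sum>S\<in>{S\<in>C. i \<in> S}. c S) = 0"
    using arg_cong[OF c, of "\<lambda>y. y $ i"] unfolding sum_scaleR_char_vec_nth by simp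
  ultimately show False
    by simp
qed

lemma balancing_weights_proper_subcollection:
  fixes c :: "'n::finite set \<Rightarrow> real"
  assumes nu: "balancing_weights C nu" and c: "(\<Sum>S\<in>C. c S *\<^sub>R char_vec S) = 0"
    and pos: "\<exists>S\<in>C. 0 < c S"
  obtains C' al where "C' \<subset> C" "balancing_weights C' al" "{S\<in>C. c S \<le> 0} \<subseteq> C'"
proof -
  define P where "P = {S\<in>C. 0 < c S}"
  define r where "r = Min ((\<lambda>S. nu S / c S) ` P)"
  have "finite P" "P \<noteq> {}"
    using pos by (auto simp: P_def)
  then have "r \<in> (\<lambda>S. nu S / c S) ` P"
    unfolding r_def by (intro Min_in) auto
  then obtain S1 where S1: "S1 \<in> P" "r = nu S1 / c S1"
    by blast
  have r_le: "r \<le> nu S / c S" if "S \<in> P" for S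
    using that \<open>finite P\<close> by (simp add: r_def)
  have nu_pos: "\<forall>S\<in>C. 0 < nu S"
    using nu by (simp add: balancing_weights_iff)
  then have "0 < r"
    using S1 by (simp add: P_def)
  \<comment> \<open>Move from \<open>nu\<close> against \<open>c\<close> until the first weight, that of \<open>S1\<close>, vanishes.\<close>
  define al where "al S = nu S - r * c S" for S
  have al_pos: "0 < al S" if "S \<in> C" "c S \<le> 0" for S
  proof -
    have "r * c S \<le> 0"
      using \<open>0 < r\<close> that(2) by (simp add: mult_nonneg_nonpos)
    moreover have "0 < nu S"
      using nu_pos that(1) by blast
    ultimately show ?thesis
      by (simp add: al_def)
  qed
  have al_nonneg: "0 \<le> al S" if "S \<in> C" for S
  proof (cases "0 < c S")
    case True
    then have "r * c S \<le> nu S"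
      using r_le[of S] that by (simp add: P_def pos_le_divide_eq)
    then show ?thesis
      by (simp add: al_def)
  next
    case False
    then show ?thesis
      using al_pos[OF that] by simp
  qed
  define C' where "C' = {S\<in>C. 0 < al S}"
  have "al S = 0" if "S \<in> C - C'" for S
    using that al_nonneg[of S] by (simp add: C'_def)
  then have "(\<Sum>S\<in>C'. al S *\<^sub>R char_vec S) = (\<Sum>S\<in>C. al S *\<^sub>R char_vec S)"
    by (intro sum.mono_neutral_left) (auto simp: C'_def)
  also have "\<dots> = (\<Sum>S\<in>C. nu S *\<^sub>R char_vec S) - r *\<^sub>R (\<Sum>S\<in>C. c S *\<^sub>R char_vec S)"
    by (simp add: al_def scaleR_diff_left sum_subtractf scaleR_sum_right)
  also have "\<dots> = char_vec UNIV"
    using nu c by (simp add: balancing_weights_iff)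
  finally have "balancing_weights C' al"
    by (simp add: balancing_weights_iff C'_def)
  moreover have "S1 \<notin> C'"
    using S1 \<open>0 < r\<close> by (simp add: C'_def al_def P_def)
  then have "C' \<subset> C"
    using S1 by (auto simp: C'_def P_def)
  moreover have "{S\<in>C. c S \<le> 0} \<subseteq> C'"
    using al_pos by (auto simp: C'_def)
  ultimately show thesis
    using that by blast
qed

lemma minimal_balanced_kernel:
  fixes c :: "'n::finite set \<Rightarrow> real"
  assumes mb: "minimal_balanced B" and c: "(\<Sum>S\<in>B. c S *\<^sub>R char_vec S) = 0" and "S \<in> B"
  shows "c S = 0"
proof (rule ccontr)
  assume "c S \<noteq> 0"
  obtain lam where lam: "balancing_weights B lam" and "{} \<notin> B"
    using mb by (auto simp: minimal_balanced_def balanced_def)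
  obtain c' where c': "(\<Sum>S\<in>B. c' S *\<^sub>R char_vec S) = 0" "\<exists>S\<in>B. 0 < c' S"
  proof (cases "0 < c S")
    case True
    then show thesis
      using that c \<open>S \<in> B\<close> by blast
  next
    case False
    then have "0 < - c S"
      using \<open>c S \<noteq> 0\<close> by simp
    moreover have "(\<Sum>S\<in>B. (- c S) *\<^sub>R char_vec S) = 0"
      using c by (simp add: sum_negf)
    ultimately show thesis
      using that[of "\<lambda>S. - c S"] \<open>S \<in> B\<close> by blast
  qed
  then obtain C' al where "C' \<subset> B" "balancing_weights C' al" "{S\<in>B. c' S \<le> 0} \<subseteq> C'"
    by (rule balancing_weights_proper_subcollection[OF lam])
  then have "balanced C'"
    using \<open>{} \<notin> B\<close> by (auto simp: balanced_def)
  then show False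
    using mb \<open>C' \<subset> B\<close> by (auto simp: minimal_balanced_def)
qed

lemma independent_char_vec:
  assumes "minimal_balanced B"
  shows "independent (char_vec ` B)"
proof
  assume "dependent (char_vec ` B)"
  then obtain u where u: "\<exists>w\<in>char_vec ` B. u w \<noteq> 0" "(\<Sum>w\<in>char_vec ` B. u w *\<^sub>R w) = 0"
    using dependent_finite[of "char_vec ` B"] by auto
  have inj: "inj_on char_vec B"
    using inj_char_vec by (rule inj_on_subset) simp
  have "(\<Sum>S\<in>B. u (char_vec S) *\<^sub>R char_vec S) = 0"
    using u(2) by (simp add: sum.reindex[OF inj])
  then have "\<forall>S\<in>B. u (char_vec S) = 0"
    using minimal_balanced_kernel[OF assms, of "\<lambda>S. u (char_vec S)"] by blast
  then show False
    using u(1) by auto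
qed

lemma card_minimal_balanced_le:
  fixes B :: "'n::finite set set"
  assumes "minimal_balanced B"
  shows "card B \<le> CARD('n)"
proof -
  have "card (char_vec ` B) \<le> DIM(real ^ 'n)"
    using independent_bound[OF independent_char_vec[OF assms]] by blast
  then show ?thesis
    by (simp add: card_image inj_on_subset[OF inj_char_vec])
qed

lemma minimal_balanced_subcollection:
  assumes "balancing_weights C nu" "{} \<notin> C" "S0 \<in> C"
  shows "\<exists>B\<subseteq>C. S0 \<in> B \<and> minimal_balanced B"
  using assms
proof (induction "card C" arbitrary: C nu rule: less_induct)
  case less
  show ?case
  proof (cases "minimal_balanced C")
    case True
    then show ?thesis
      using less.prems by blast
  next
    case False
    then obtain B lam where B: "B \<subset> C" "balancing_weights B lam"
      using less.prems by (auto simp: minimal_balanced_def balanced_def)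
    then have "card B < card C" "{} \<notin> B"
      using less.prems by (auto intro: psubset_card_mono)
    show ?thesis
    proof (cases "S0 \<in> B")
      case True
      then show ?thesis
        using less.hyps[OF \<open>card B < card C\<close> B(2) \<open>{} \<notin> B\<close>] B(1) by blast
    next
      case False
      \<comment> \<open>Extrapolate from the weights of \<open>B\<close> through \<open>nu\<close>: the weight of \<open>S0 \<notin> B\<close> only grows.\<close>
      define c where "c S = (if S \<in> B then lam S else 0) - nu S" for S
      have "(\<Sum>S\<in>C. (if S \<in> B then lam S else 0) *\<^sub>R char_vec S) = (\<Sum>S\<in>B. lam S *\<^sub>R char_vec S)"
        using B(1) by (intro sum.mono_neutral_cong_right) auto
      then have "(\<Sum>S\<in>C. c S *\<^sub>R char_vec S)
          = (\<Sum>S\<in>B. lam S *\<^sub>R char_vec S) - (\<Sum>S\<in>C. nu S *\<^sub>R char_vec S)"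
        by (simp add: c_def scaleR_diff_left sum_subtractf)
      then have c: "(\<Sum>S\<in>C. c S *\<^sub>R char_vec S) = 0"
        using B(2) less.prems(1) by (simp add: balancing_weights_iff)
      have "c S0 < 0"
        using False less.prems by (simp add: c_def balancing_weights_iff)
      moreover have "S0 \<noteq> {}"
        using less.prems by auto
      ultimately have "\<exists>S\<in>C. 0 < c S"
        using exists_pos_coeff[OF c less.prems(3)] by blast
      then obtain C' al where C': "C' \<subset> C" "balancing_weights C' al" "{S\<in>C. c S \<le> 0} \<subseteq> C'"
        by (rule balancing_weights_proper_subcollection[OF less.prems(1) c])
      have "card C' < card C" "{} \<notin> C'" "S0 \<in> C'"
        using C' less.prems \<open>c S0 < 0\<close> by (auto intro: psubset_card_mono)
      then obtain B' where "B' \<subseteq> C'" "S0 \<in> B'" "minimal_balanced B'"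
        using less.hyps[OF _ C'(2)] by blast
      then show ?thesis
        using C'(1) by blast
    qed
  qed
qed

lemma Bstar_subcollection:
  fixes nu :: "'n::finite set \<Rightarrow> real"
  assumes nonneg: "\<forall>S\<in>C. 0 \<le> nu S"
    and sum: "(\<Sum>S\<in>C. nu S *\<^sub>R char_vec S) = k *\<^sub>R char_vec UNIV"
    and S0: "S0 \<in> C" "0 < nu S0" "S0 \<noteq> {}" "S0 \<noteq> UNIV"
  shows "\<exists>B\<in>Bstar. B \<subseteq> C \<and> S0 \<in> B"
proof -
  obtain i where "i \<in> S0"
    using S0 by auto
  have "nu S0 \<le> (\<Sum>S\<in>{S\<in>C. i \<in> S}. nu S)"
    using nonneg S0 \<open>i \<in> S0\<close> by (intro member_le_sum) auto
  also have "\<dots> = k"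
    using sum by (simp add: sum_scaleR_char_vec_eq_iff)
  finally have "0 < k"
    using S0 by simp
  define C' where "C' = {S\<in>C. S \<noteq> {} \<and> 0 < nu S}"
  have "(\<Sum>S\<in>C'. (nu S / k) *\<^sub>R char_vec S) = (\<Sum>S\<in>C. (nu S / k) *\<^sub>R char_vec S)"
    using nonneg by (intro sum.mono_neutral_left) (auto simp: C'_def order.order_iff_strict)
  also have "\<dots> = (1 / k) *\<^sub>R (\<Sum>S\<in>C. nu S *\<^sub>R char_vec S)"
    by (simp add: scaleR_sum_right)
  also have "\<dots> = char_vec UNIV"
    using sum \<open>0 < k\<close> by simp
  finally have "balancing_weights C' (\<lambda>S. nu S / k)"
    using \<open>0 < k\<close> by (simp add: balancing_weights_iff C'_def)
  moreover have "{} \<notin> C'" "S0 \<in> C'"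
    using S0 by (auto simp: C'_def)
  ultimately obtain B where "B \<subseteq> C'" "S0 \<in> B" "minimal_balanced B"
    using minimal_balanced_subcollection by blast
  moreover have "B \<noteq> {UNIV}"
    using \<open>S0 \<in> B\<close> S0(4) by auto
  ultimately show ?thesis
    by (auto simp: Bstar_def C'_def)
qed

lemma core_tight_on_balanced:
  assumes lam: "balancing_weights B lam" and eq: "(\<Sum>S\<in>B. lam S * v $ S) = v $ UNIV"
    and y: "y \<in> core v"
  shows "\<forall>S\<in>B. coalition_sum y S = v $ S"
proof -
  have pos: "\<forall>S\<in>B. 0 < lam S"
    using lam by (simp add: balancing_weights_iff)
  have le: "\<forall>S\<in>B. v $ S \<le> coalition_sum y S"
    using y by (simp add: mem_core_iff)
  have "(\<Sum>S\<in>B. lam S * coalition_sum y S) = (\<Sum>S\<in>B. lam S * v $ S)"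
    using balancing_weights_coalition_sum[OF lam] eq y by (simp add: mem_core_iff)
  then have "\<forall>S\<in>B. v $ S = coalition_sum y S"
    by (intro sum_weighted_mono_imp_eq[OF finite pos le]) simp
  then show ?thesis
    by simp
qed

lemma balanced_game_eq_on_Bstar:
  assumes v: "v \<in> balanced_games" and B: "B \<in> Bstar"
    and le: "\<forall>S\<in>B. coalition_sum x S \<le> v $ S" and le_UNIV: "v $ UNIV \<le> coalition_sum x UNIV"
  shows "\<forall>S\<in>B. coalition_sum x S = v $ S"
proof -
  have lam: "balancing_weights B (bal_weight B)"
    using B by (rule Bstar_balancing_weights)
  then have pos: "\<forall>S\<in>B. 0 < bal_weight B S"
    by (simp add: balancing_weights_iff)
  have "(\<Sum>S\<in>B. bal_weight B S * v $ S) \<le> v $ UNIV"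
    using v B by (simp add: balanced_games_def)
  also have "\<dots> \<le> (\<Sum>S\<in>B. bal_weight B S * coalition_sum x S)"
    using le_UNIV by (simp add: balancing_weights_coalition_sum[OF lam])
  finally show ?thesis
    by (rule sum_weighted_mono_imp_eq[OF finite pos le])
qed

lemma sum_char_vec_of_span:
  fixes B :: "'n::finite set set"
  assumes "y \<in> span (char_vec ` B)"
  obtains a where "y = (\<Sum>S\<in>B. a S *\<^sub>R char_vec S)"
proof -
  obtain u where "y = (\<Sum>w\<in>char_vec ` B. u w *\<^sub>R w)"
    using assms span_finite[of "char_vec ` B"] by auto
  then have "y = (\<Sum>S\<in>B. u (char_vec S) *\<^sub>R char_vec S)"
    by (simp add: sum.reindex inj_on_subset[OF inj_char_vec])
  then show thesis
    by (rule that)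
qed

lemma balanced_game_le_of_span:
  assumes v: "v \<in> balanced_games" and lam: "balancing_weights B lam"
    and tight: "\<forall>S\<in>B. coalition_sum x S = v $ S" and eff: "coalition_sum x UNIV = v $ UNIV"
    and T: "char_vec T \<in> span (char_vec ` B)"
  shows "v $ T \<le> coalition_sum x T"
proof (rule ccontr)
  assume "\<not> ?thesis"
  then have lt: "coalition_sum x T < v $ T"
    by simp
  have "v $ {} = 0"
    using v by (simp add: balanced_games_def)
  then have "T \<noteq> {}"
    using lt by auto
  have "T \<noteq> UNIV" "T \<notin> B"
    using lt eff tight by auto
  obtain a where a: "char_vec T = (\<Sum>S\<in>B. a S *\<^sub>R char_vec S)"
    using sum_char_vec_of_span[OF T] by blast
  have "\<forall>S\<in>B. 0 < lam S"
    using lam by (simp add: balancing_weights_iff)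
  then obtain t where "0 < t" and t: "\<forall>S\<in>B. 0 < lam S + t * - a S"
    using small_perturbation_pos[of B lam "\<lambda>S. - a S", OF finite] by blast
  \<comment> \<open>Shift weight \<open>t\<close> from the representation of \<open>T\<close> in \<open>B\<close> onto \<open>T\<close> itself.\<close>
  define nu where "nu S = (if S = T then t else lam S - t * a S)" for S
  have "(\<Sum>S\<in>B. nu S *\<^sub>R char_vec S) = (\<Sum>S\<in>B. (lam S - t * a S) *\<^sub>R char_vec S)"
    using \<open>T \<notin> B\<close> by (intro sum.cong) (auto simp: nu_def)
  then have "(\<Sum>S\<in>insert T B. nu S *\<^sub>R char_vec S)
      = t *\<^sub>R char_vec T + (\<Sum>S\<in>B. lam S *\<^sub>R char_vec S) - t *\<^sub>R (\<Sum>S\<in>B. a S *\<^sub>R char_vec S)"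
    using \<open>T \<notin> B\<close> by (simp add: nu_def scaleR_diff_left sum_subtractf scaleR_sum_right)
  also have "\<dots> = 1 *\<^sub>R char_vec UNIV"
    using lam by (simp add: balancing_weights_iff flip: a)
  finally have nu_sum: "(\<Sum>S\<in>insert T B. nu S *\<^sub>R char_vec S) = 1 *\<^sub>R char_vec UNIV" .
  have nu_nonneg: "\<forall>S\<in>insert T B. 0 \<le> nu S"
    using t \<open>0 < t\<close> by (simp add: nu_def less_imp_le)
  have "0 < nu T"
    using \<open>0 < t\<close> by (simp add: nu_def)
  then obtain B' where B': "B' \<in> Bstar" "B' \<subseteq> insert T B" "T \<in> B'"
    using Bstar_subcollection[OF nu_nonneg nu_sum insertI1 _ \<open>T \<noteq> {}\<close> \<open>T \<noteq> UNIV\<close>] by blast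
  have le: "\<forall>S\<in>B'. coalition_sum x S \<le> v $ S"
  proof
    fix S assume "S \<in> B'"
    show "coalition_sum x S \<le> v $ S"
    proof (cases "S = T")
      case True
      then show ?thesis
        using lt by simp
    next
      case False
      then show ?thesis
        using \<open>S \<in> B'\<close> B'(2) tight by auto
    qed
  qed
  have "\<forall>S\<in>B'. coalition_sum x S = v $ S"
    using balanced_game_eq_on_Bstar[OF v B'(1) le] eff by simp
  then show False
    using B'(3) lt by simp
qed

lemma exists_coalition_sums:
  fixes g :: "'n::finite set \<Rightarrow> real"
  assumes "independent (char_vec ` B)"
  shows "\<exists>x. \<forall>S\<in>B. coalition_sum x S = g S"
proof -
  obtain f :: "real ^ 'n \<Rightarrow> real" where f: "linear f"
    "\<forall>w\<in>char_vec ` B. f w = g (inv_into B char_vec w)"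
    using linear_independent_extend[OF assms, of "\<lambda>w. g (inv_into B char_vec w)"] by blast
  have "coalition_sum (adjoint f 1) S = g S" if "S \<in> B" for S
  proof -
    have "coalition_sum (adjoint f 1) S = f (char_vec S)"
      using adjoint_works[OF f(1), of "char_vec S" 1]
      by (simp add: inner_commute[of "char_vec S"] inner_char_vec)
    also have "\<dots> = g S"
      using f(2) that by (simp add: inv_into_f_f inj_on_subset[OF inj_char_vec])
    finally show ?thesis .
  qed
  then show ?thesis
    by blast
qed

lemma facet_core_singleton:
  fixes B :: "'n::finite set set"
  assumes B: "B \<in> Bstar" and card: "card B = CARD('n)" and v: "v \<in> facet B"
  shows "\<exists>x. core v = {x}"
proof -
  have lam: "balancing_weights B (bal_weight B)"
    using B by (rule Bstar_balancing_weights)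
  have eq: "(\<Sum>S\<in>B. bal_weight B S * v $ S) = v $ UNIV" and vb: "v \<in> balanced_games"
    using v by (simp_all add: facet_def)
  have ind: "independent (char_vec ` B)"
    using B by (simp add: Bstar_def independent_char_vec)
  have "card (char_vec ` B) = DIM(real ^ 'n)"
    using card by (simp add: card_image inj_on_subset[OF inj_char_vec])
  then have "UNIV \<subseteq> span (char_vec ` B)"
    using card_ge_dim_independent[OF _ ind, of UNIV] by simp
  then have span: "span (char_vec ` B) = UNIV"
    by blast
  obtain x where x: "\<forall>S\<in>B. coalition_sum x S = v $ S"
    using exists_coalition_sums[OF ind] by blast
  have eff: "coalition_sum x UNIV = v $ UNIV"
    using balancing_weights_coalition_sum[OF lam, of x] eq x by simp
  have "x \<in> core v"
    using balanced_game_le_of_span[OF vb lam x eff] span eff by (simp add: mem_core_iff)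
  moreover have "y = x" if "y \<in> core v" for y
  proof -
    have "orthogonal (y - x) w" if "w \<in> char_vec ` B" for w
      using that core_tight_on_balanced[OF lam eq \<open>y \<in> core v\<close>] x
      by (auto simp: orthogonal_def inner_diff_left inner_char_vec)
    then have "orthogonal (y - x) (y - x)"
      using orthogonal_to_span[of "y - x" "char_vec ` B"] span by blast
    then show ?thesis
      by (simp add: orthogonal_def)
  qed
  ultimately show ?thesis
    by blast
qed

lemma core_perturb:
  assumes x: "x \<in> core v" and a: "\<forall>S\<in>tight v x. 0 \<le> coalition_sum a S"
    and a_UNIV: "coalition_sum a UNIV = 0"
  shows "\<exists>t>0. x + t *\<^sub>R a \<in> core v"
proof -
  have "0 < coalition_sum x S - v $ S" if "S \<in> - tight v x" for S
  proof -
    have "v $ S \<le> coalition_sum x S"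
      using x by (simp add: mem_core_iff)
    moreover have "coalition_sum x S \<noteq> v $ S"
      using that by (simp add: tight_def)
    ultimately show ?thesis
      by linarith
  qed
  then obtain t where "0 < t" and t: "\<forall>S\<in>- tight v x. 0 < coalition_sum x S - v $ S + t * coalition_sum a S"
    using small_perturbation_pos[of "- tight v x" "\<lambda>S. coalition_sum x S - v $ S" "coalition_sum a",
        OF finite]
    by blast
  have "v $ S \<le> coalition_sum (x + t *\<^sub>R a) S" for S
  proof (cases "S \<in> tight v x")
    case True
    then show ?thesis
      using a \<open>0 < t\<close> by (simp add: tight_def coalition_sum_add_scaleR)
  next
    case False
    then show ?thesis
      using bspec[OF t, of S] False by (simp add: coalition_sum_add_scaleR)
  qed
  then show ?thesis
    using x a_UNIV \<open>0 < t\<close> by (auto simp: mem_core_iff coalition_sum_add_scaleR)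
qed

lemma mem_convex_cone_hull_finite_image:
  assumes "finite I" "y \<in> convex_cone hull (f ` I)"
  shows "\<exists>u. (\<forall>i\<in>I. 0 \<le> u i) \<and> y = (\<Sum>i\<in>I. u i *\<^sub>R f i)"
proof -
  define K where "K = {(\<Sum>i\<in>I. u i *\<^sub>R f i) | u. \<forall>i\<in>I. 0 \<le> u i}"
  have "convex_cone K"
    unfolding convex_cone_iff
  proof (intro conjI ballI allI impI)
    show "0 \<in> K"
      unfolding K_def by (rule CollectI, rule exI[of _ "\<lambda>_. 0"]) simp
  next
    fix y z assume "y \<in> K" "z \<in> K"
    then obtain u w where "y = (\<Sum>i\<in>I. u i *\<^sub>R f i)" "z = (\<Sum>i\<in>I. w i *\<^sub>R f i)"
      "\<forall>i\<in>I. 0 \<le> u i" "\<forall>i\<in>I. 0 \<le> w i"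
      by (auto simp: K_def)
    then show "y + z \<in> K"
      unfolding K_def
      by (intro CollectI exI[of _ "\<lambda>i. u i + w i"]) (simp add: scaleR_add_left sum.distrib)
  next
    fix y and c :: real assume "y \<in> K" "0 \<le> c"
    then obtain u where "y = (\<Sum>i\<in>I. u i *\<^sub>R f i)" "\<forall>i\<in>I. 0 \<le> u i"
      by (auto simp: K_def)
    then show "c *\<^sub>R y \<in> K"
      unfolding K_def using \<open>0 \<le> c\<close>
      by (intro CollectI exI[of _ "\<lambda>i. c * u i"]) (simp add: scaleR_sum_right)
  qed
  moreover have "f ` I \<subseteq> K"
  proof
    fix y assume "y \<in> f ` I"
    then obtain j where "j \<in> I" "y = f j"
      by blast
    have "(\<Sum>i\<in>I. (if i = j then 1 else 0) *\<^sub>R f i) = (\<Sum>i\<in>I. if i = j then f i else 0)"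
      by (intro sum.cong) auto
    also have "\<dots> = y"
      using \<open>finite I\<close> \<open>j \<in> I\<close> \<open>y = f j\<close> by simp
    finally show "y \<in> K"
      unfolding K_def by (intro CollectI exI[of _ "\<lambda>i. if i = j then 1 else 0"]) simp
  qed
  ultimately have "convex_cone hull (f ` I) \<subseteq> K"
    by (rule hull_minimal[rotated])
  then show ?thesis
    using assms(2) by (auto simp: K_def)
qed

lemma singleton_core_cone_hull:
  assumes core: "core v = {x}"
  shows "e \<in> convex_cone hull (char_vec ` tight v x \<union> {- char_vec UNIV})"
    (is "e \<in> ?K")
proof (rule ccontr)
  \<comment> \<open>A hyperplane separating \<open>e\<close> from the cone gives a direction in which \<open>x\<close> can move
    inside the core.\<close>
  assume "e \<notin> ?K"
  moreover have "convex ?K" "closed ?K"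
    by (simp_all add: convex_convex_cone_hull closed_convex_cone_hull)
  ultimately obtain a b where ab: "a \<bullet> e < b" "\<forall>y\<in>?K. b < a \<bullet> y"
    using separating_hyperplane_closed_point by blast
  have "b < 0"
    using ab(2) convex_cone_hull_contains_0 by fastforce
  have nonneg: "0 \<le> a \<bullet> y" if "y \<in> ?K" for y
  proof (rule ccontr)
    assume "\<not> 0 \<le> a \<bullet> y"
    then have "(b / (a \<bullet> y)) *\<^sub>R y \<in> ?K"
      using \<open>b < 0\<close> that by (intro convex_cone_hull_mul) (auto simp: divide_nonpos_neg less_imp_le)
    then show False
      using ab(2) \<open>\<not> 0 \<le> a \<bullet> y\<close> by fastforce
  qed
  have gen: "char_vec ` tight v x \<union> {- char_vec UNIV} \<subseteq> ?K"
    by (rule hull_subset)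
  have x: "x \<in> core v"
    using core by simp
  then have "UNIV \<in> tight v x"
    by (simp add: tight_def mem_core_iff)
  then have "coalition_sum a UNIV = 0"
    using nonneg[of "char_vec UNIV"] nonneg[of "- char_vec UNIV"] gen by (force simp: inner_char_vec)
  moreover have "\<forall>S\<in>tight v x. 0 \<le> coalition_sum a S"
    using nonneg gen by (force simp: inner_char_vec)
  ultimately obtain t where "0 < t" "x + t *\<^sub>R a \<in> core v"
    using core_perturb[OF x] by blast
  then have "a = 0"
    using core by simp
  then show False
    using ab \<open>b < 0\<close> by simp
qed

lemma singleton_core_cone:
  assumes core: "core v = {x}"
  obtains mu m where "\<forall>S\<in>tight v x. 0 \<le> mu S" "0 \<le> m"
    "e = (\<Sum>S\<in>tight v x. mu S *\<^sub>R char_vec S) - m *\<^sub>R char_vec UNIV"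
proof -
  obtain p q where "e = p + q" and p: "p \<in> convex_cone hull (char_vec ` tight v x)"
    and q: "q \<in> convex_cone hull {- char_vec UNIV}"
    using singleton_core_cone_hull[OF core] unfolding convex_cone_hull_Un by blast
  obtain mu where "\<forall>S\<in>tight v x. 0 \<le> mu S" "p = (\<Sum>S\<in>tight v x. mu S *\<^sub>R char_vec S)"
    using mem_convex_cone_hull_finite_image[OF _ p] by auto
  moreover obtain m where "0 \<le> m" "q = - (m *\<^sub>R char_vec UNIV)"
    using q by (force simp: convex_cone_hull_convex_hull)
  ultimately show thesis
    using that \<open>e = p + q\<close> by simp
qed

lemma singleton_core_tight_Bstar:
  assumes core: "core v = {x}" and "d \<noteq> 0" and d_UNIV: "coalition_sum d UNIV = 0"
  shows "\<exists>B\<in>Bstar. B \<subseteq> tight v x \<and> (\<exists>S0\<in>B. coalition_sum d S0 \<noteq> 0)"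
proof -
  obtain mu m where mu: "\<forall>S\<in>tight v x. 0 \<le> mu S" "0 \<le> m"
    and d: "d = (\<Sum>S\<in>tight v x. mu S *\<^sub>R char_vec S) - m *\<^sub>R char_vec UNIV"
    by (rule singleton_core_cone[OF core])
  obtain mu' m' where mu': "\<forall>S\<in>tight v x. 0 \<le> mu' S" "0 \<le> m'"
    and d': "- d = (\<Sum>S\<in>tight v x. mu' S *\<^sub>R char_vec S) - m' *\<^sub>R char_vec UNIV"
    by (rule singleton_core_cone[OF core])
  have "d \<bullet> d = d \<bullet> ((\<Sum>S\<in>tight v x. mu S *\<^sub>R char_vec S) - m *\<^sub>R char_vec UNIV)"
    by (rule arg_cong[OF d])
  also have "\<dots> = (\<Sum>S\<in>tight v x. mu S * coalition_sum d S)"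
    using d_UNIV by (simp add: inner_diff_right inner_sum_right inner_char_vec)
  finally have "d \<bullet> d = (\<Sum>S\<in>tight v x. mu S * coalition_sum d S)" .
  moreover have "d \<bullet> d \<noteq> 0"
    using \<open>d \<noteq> 0\<close> by simp
  ultimately have "(\<Sum>S\<in>tight v x. mu S * coalition_sum d S) \<noteq> 0"
    by simp
  then obtain S0 where S0: "S0 \<in> tight v x" "mu S0 * coalition_sum d S0 \<noteq> 0"
    by (rule sum.not_neutral_contains_not_neutral)
  \<comment> \<open>Adding the representations of \<open>d\<close> and \<open>- d\<close> yields a nonnegative combination of tight
    coalitions proportional to \<open>char_vec UNIV\<close> which charges \<open>S0\<close>.\<close>
  define nu where "nu S = mu S + mu' S" for S
  have "(\<Sum>S\<in>tight v x. nu S *\<^sub>R char_vec S) - (m + m') *\<^sub>R char_vec UNIV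
      = ((\<Sum>S\<in>tight v x. mu S *\<^sub>R char_vec S) - m *\<^sub>R char_vec UNIV)
        + ((\<Sum>S\<in>tight v x. mu' S *\<^sub>R char_vec S) - m' *\<^sub>R char_vec UNIV)"
    by (simp add: nu_def scaleR_add_left sum.distrib algebra_simps)
  also have "\<dots> = d + - d"
    by (simp only: d[symmetric] d'[symmetric])
  finally have nu_sum: "(\<Sum>S\<in>tight v x. nu S *\<^sub>R char_vec S) = (m + m') *\<^sub>R char_vec UNIV"
    by simp
  have nu_nonneg: "\<forall>S\<in>tight v x. 0 \<le> nu S"
    using mu(1) mu'(1) by (simp add: nu_def)
  have "0 \<le> mu S0" "0 \<le> mu' S0" "mu S0 \<noteq> 0"
    using S0 mu(1) mu'(1) by auto
  then have "0 < nu S0"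
    by (simp add: nu_def)
  moreover have "S0 \<noteq> {}" "S0 \<noteq> UNIV"
    using S0(2) d_UNIV by auto
  ultimately obtain B where "B \<in> Bstar" "B \<subseteq> tight v x" "S0 \<in> B"
    using Bstar_subcollection[OF nu_nonneg nu_sum S0(1)] by blast
  moreover have "coalition_sum d S0 \<noteq> 0"
    using S0(2) by simp
  ultimately show ?thesis
    by blast
qed

lemma rel_interior_extend_beyond:
  fixes F :: "'a::euclidean_space set"
  assumes v: "v \<in> rel_interior F" and w: "w \<in> F"
  shows "\<exists>s>0. v + s *\<^sub>R (v - w) \<in> F"
proof -
  obtain e where "0 < e" and e: "cball v e \<inter> affine hull F \<subseteq> F"
    using v mem_rel_interior_cball by blast
  define s where "s = e / (norm (v - w) + 1)"
  have "0 < s"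
    using \<open>0 < e\<close> by (simp add: s_def add_nonneg_pos)
  have "s * norm (v - w) \<le> s * (norm (v - w) + 1)"
    using \<open>0 < s\<close> by simp
  also have "\<dots> = e"
  proof -
    have "norm (v - w) + 1 \<noteq> 0"
      using norm_ge_zero[of "v - w"] by linarith
    then show ?thesis
      by (simp add: s_def)
  qed
  finally have "v + s *\<^sub>R (v - w) \<in> cball v e"
    using \<open>0 < s\<close> by (simp add: dist_norm)
  moreover have "(1 + s) *\<^sub>R v + (- s) *\<^sub>R w \<in> affine hull F"
    using v w rel_interior_subset
    by (intro mem_affine[OF affine_affine_hull]) (auto intro: hull_inc)
  then have "v + s *\<^sub>R (v - w) \<in> affine hull F"
    by (simp add: algebra_simps)
  ultimately show ?thesis
    using e \<open>0 < s\<close> by blast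
qed

lemma facet_diff_axis:
  assumes v: "v \<in> facet B" and S0: "S0 \<notin> B" "S0 \<noteq> {}" "S0 \<noteq> UNIV" and "0 \<le> t"
  shows "v - axis S0 t \<in> facet B"
proof -
  have ax: "axis S0 t $ S = (if S = S0 then t else 0)" for S
    by (simp add: axis_def)
  have "(\<Sum>S\<in>B'. bal_weight B' S * (v - axis S0 t) $ S) \<le> (v - axis S0 t) $ UNIV"
    if "B' \<in> Bstar" for B'
  proof -
    have "(\<Sum>S\<in>B'. bal_weight B' S * (v - axis S0 t) $ S) \<le> (\<Sum>S\<in>B'. bal_weight B' S * v $ S)"
      using Bstar_balancing_weights[OF that] \<open>0 \<le> t\<close>
      by (intro sum_mono) (auto simp: axis_def balancing_weights_iff)
    also have "\<dots> \<le> v $ UNIV"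
      using v that by (simp add: facet_def balanced_games_def)
    finally show ?thesis
      using S0(3) by (simp add: ax)
  qed
  moreover have "(\<Sum>S\<in>B. bal_weight B S * (v - axis S0 t) $ S) = (\<Sum>S\<in>B. bal_weight B S * v $ S)"
    using S0(1) by (intro sum.cong) (auto simp: ax)
  ultimately show ?thesis
    using v S0 by (simp add: facet_def balanced_games_def ax)
qed

lemma rel_interior_facet_core_not_singleton:
  fixes B :: "'n::finite set set"
  assumes B: "B \<in> Bstar" and card: "card B \<noteq> CARD('n)" and v: "v \<in> rel_interior (facet B)"
  shows "core v \<noteq> {x}"
proof
  assume core: "core v = {x}"
  have lam: "balancing_weights B (bal_weight B)"
    using B by (rule Bstar_balancing_weights)
  have vF: "v \<in> facet B"
    using v rel_interior_subset by blast
  have "dim (char_vec ` B) \<le> card B"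
    using dim_le_card'[of "char_vec ` B"] card_image_le[of B char_vec] by simp
  also have "\<dots> < DIM(real ^ 'n)"
    using card card_minimal_balanced_le[of B] B by (simp add: Bstar_def)
  finally obtain d where "d \<noteq> 0" and d: "\<And>y. y \<in> span (char_vec ` B) \<Longrightarrow> orthogonal d y"
    using orthogonal_to_subspace_exists by blast
  have dB: "\<forall>S\<in>B. coalition_sum d S = 0"
  proof
    fix S assume "S \<in> B"
    then have "orthogonal d (char_vec S)"
      by (intro d span_base imageI)
    then show "coalition_sum d S = 0"
      by (simp add: orthogonal_def inner_char_vec)
  qed
  then have "coalition_sum d UNIV = 0"
    using balancing_weights_coalition_sum[OF lam, of d] by simp
  then obtain B' S0 where B': "B' \<in> Bstar" "B' \<subseteq> tight v x" "S0 \<in> B'" "coalition_sum d S0 \<noteq> 0"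
    using singleton_core_tight_Bstar[OF core \<open>d \<noteq> 0\<close>] by blast
  have "S0 \<notin> B" "S0 \<noteq> {}" "S0 \<noteq> UNIV"
    using B'(4) dB \<open>coalition_sum d UNIV = 0\<close> by auto
  \<comment> \<open>Lowering \<open>v\<close> at \<open>S0\<close> stays in the facet, so relative interiority allows raising it as well.\<close>
  then have "v - axis S0 1 \<in> facet B"
    using vF by (intro facet_diff_axis) auto
  then obtain s where "0 < s" and "v + s *\<^sub>R (v - (v - axis S0 1)) \<in> facet B"
    using rel_interior_extend_beyond[OF v] by blast
  moreover have "v + s *\<^sub>R (v - (v - axis S0 1)) = v + axis S0 s"
    by (simp add: vec_eq_iff axis_def)
  ultimately have w: "v + axis S0 s \<in> balanced_games"
    by (simp add: facet_def)
  have ax: "axis S0 s $ S = (if S = S0 then s else 0)" for S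
    by (simp add: axis_def)
  have x_S0: "coalition_sum x S0 = v $ S0"
    using B'(2,3) by (auto simp: tight_def)
  have le: "\<forall>S\<in>B'. coalition_sum x S \<le> (v + axis S0 s) $ S"
    using B'(2) \<open>0 < s\<close> by (auto simp: ax tight_def)
  have "x \<in> core v"
    using core by simp
  then have "(v + axis S0 s) $ UNIV \<le> coalition_sum x UNIV"
    using \<open>S0 \<noteq> UNIV\<close> by (simp add: ax mem_core_iff)
  then have "coalition_sum x S0 = (v + axis S0 s) $ S0"
    using balanced_game_eq_on_Bstar[OF w B'(1) le] B'(3) by blast
  then show False
    using x_S0 \<open>0 < s\<close> by (simp add: ax)
qed

theorem theorem17:
  fixes B :: "'n::finite set set"
  assumes "B \<in> Bstar"
  shows "(card B = CARD('n) \<longrightarrow> (\<forall>v\<in>facet B. \<exists>x. core v = {x}))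
       \<and> (card B \<noteq> CARD('n) \<longrightarrow> (\<forall>v\<in>rel_interior (facet B). \<not> (\<exists>x. core v = {x})))"
  using facet_core_singleton[OF assms] rel_interior_facet_core_not_singleton[OF assms] by blast

end
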